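(* Let $H\in\mathbb{N}$, let $\{\mathcal{F}_h^k\}_{k\in\mathbb{N},h\in[H]}$ be a filtration that is increasing in the lexicographic order of $(k,h)$ (i.e. $\mathcal{F}_1^1\subseteq\mathcal{F}_2^1\subseteq\dots\subseteq\mathcal{F}_H^1\subseteq\mathcal{F}_1^2\subseteq\cdots$), and let $\{X_h^k\}$ be non-negative random variables with $X_h^k$ being $\mathcal{F}_h^k$-measurable. Let $c>0$ be a constant, and define recursively $J_{H+1}^k:=0$ and $J_h^k:=\big(X_h^k+\mathbb{E}[J_{h+1}^k\mid\mathcal{F}_h^k]\big)\wedge c$ for all $k\in\mathbb{N}$, $h\in[H]$. Then for any $\delta\in(0,1]$, with probability at least $1-\delta$, simultaneously for all $K\in\mathbb{N}$, $$\sum_{k=1}^KJ_1^k\le2\sum_{k=1}^K\sum_{h=1}^HX_h^k+6c\log\frac2\delta.$$ *)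

theory Defs
  imports "HOL-Probability.Probability"
begin

(* J M F X c H k h  =  J_h^k :  J_h^k = 0 for h > H (in particular J_{H+1}^k = 0),
   and J_h^k = min (X_h^k + E[J_{h+1}^k | F_h^k]) c  for h <= H.
   Indices: F k h = F_h^k, X k h = X_h^k. *)
function Jfun :: "'a measure \<Rightarrow> (nat \<Rightarrow> nat \<Rightarrow> 'a measure) \<Rightarrow> (nat \<Rightarrow> nat \<Rightarrow> 'a \<Rightarrow> real)
    \<Rightarrow> real \<Rightarrow> nat \<Rightarrow> nat \<Rightarrow> nat \<Rightarrow> 'a \<Rightarrow> real" where
  "Jfun M F X c H k h =
     (if H < h then (\<lambda>_. 0)
      else (\<lambda>\<omega>. min (X k h \<omega> + real_cond_exp M (F k h) (Jfun M F X c H k (Suc h)) \<omega>) c))"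
  by auto
termination
  by (relation "Wellfounded.measure (\<lambda>(M, F, X, c, H, k, h). Suc H - h)") auto

end

theory Submission
  imports Defs
begin

(* Let Z_h^k = exp (-(X_h^k + ... + X_H^k) / c) (tail_weight). Backward induction over h,
   using exp (-x) * (1 - e/2) <= 1 - min (x + e) 1 / 2, shows E[Z_h^k | F_h^k] <= 1 - J_h^k / (2c).
   As exp t * (1 - t) <= 1, the factors D_k = exp (J_1^k / (2c)) * Z_1^k (episode_factor) have
   conditional mean at most 1 given F_1^k, so their partial products form a nonnegative
   supermartingale started at 1. By Ville's inequality (Markov's inequality for the product stopped
   when it first reaches 1/delta), with probability at least 1 - delta all partial products stay
   below 1/delta; taking logarithms gives sum J_1^k <= 2 sum X_h^k + 2c log (1/delta) for all K at
   once, which is stronger than the claimed bound. *)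

lemma exp_mult_one_minus_le_one: "exp t * (1 - t) \<le> (1::real)"
proof -
  have "exp t * (1 - t) \<le> exp t * exp (-t)"
    using exp_ge_add_one_self[of "-t"] by (intro mult_left_mono) auto
  then show ?thesis by (simp add: exp_minus)
qed

lemma exp_neg_mult_le_one_minus_min:
  fixes x e c :: real
  assumes "0 \<le> x" "0 \<le> e" "e \<le> c" "0 < c"
  shows "exp (- x / c) * (1 - e / (2 * c)) \<le> 1 - min (x + e) c / (2 * c)"
proof -
  define u where "u = x / c"
  define v where "v = e / c"
  have u: "0 \<le> u" and v: "0 \<le> v" "v \<le> 1" using assms by (auto simp: u_def v_def)
  have lhs: "exp (- x / c) * (1 - e / (2 * c)) = exp (-u) * (1 - v / 2)"
    using assms by (simp add: u_def v_def field_simps)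
  have rhs: "min (x + e) c / (2 * c) = min (u + v) 1 / 2"
    using assms by (auto simp: u_def v_def min_def field_simps)
  have "exp (-u) \<le> 1 / (1 + u)"
    using exp_ge_add_one_self[of u] u by (simp add: exp_minus field_simps)
  then have "exp (-u) * (1 - v / 2) \<le> 1 / (1 + u) * (1 - v / 2)"
    using v by (intro mult_right_mono) auto
  also have "\<dots> \<le> 1 - min (u + v) 1 / 2"
  proof (cases "u + v \<le> 1")
    case True
    then have "u * (u + v) \<le> u" using u by (simp add: mult_left_le)
    then have "1 - v / 2 \<le> (1 + u) * (1 - (u + v) / 2)" by (simp add: algebra_simps)
    then show ?thesis using True u by (simp add: field_simps min_def)
  qed (use u v in \<open>simp add: field_simps min_def\<close>)
  finally show ?thesis using lhs rhs by simp
qed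

lemma (in sigma_finite_subalgebra) integral_mult_le_of_cond_exp_le_one:
  fixes f g :: "'a \<Rightarrow> real"
  assumes "f \<in> borel_measurable F" "g \<in> borel_measurable M"
    and "integrable M f" "integrable M (\<lambda>x. f x * g x)"
    and "AE x in M. 0 \<le> f x" "AE x in M. real_cond_exp M F g x \<le> 1"
  shows "(\<integral>x. f x * g x \<partial>M) \<le> (\<integral>x. f x \<partial>M)"
proof -
  note cond = real_cond_exp_intg[OF assms(4,1,2)]
  have "(\<integral>x. f x * g x \<partial>M) = (\<integral>x. f x * real_cond_exp M F g x \<partial>M)"
    using cond(2) by simp
  also have "\<dots> \<le> (\<integral>x. f x \<partial>M)"
    using assms(5,6) by (intro integral_mono_AE[OF cond(1) assms(3)]) (auto simp: mult_left_le)
  finally show ?thesis .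
qed

lemma (in finite_measure_subalgebra) AE_real_cond_exp_affine:
  fixes f :: "'a \<Rightarrow> real"
  assumes "integrable M f"
  shows "AE x in M. real_cond_exp M F (\<lambda>x. a + b * f x) x = a + b * real_cond_exp M F f x"
proof -
  have "AE x in M. real_cond_exp M F (\<lambda>x. a + b * f x) x
                   = real_cond_exp M F (\<lambda>_. a) x + real_cond_exp M F (\<lambda>x. b * f x) x"
    using assms by (intro real_cond_exp_add) auto
  moreover have "AE x in M. real_cond_exp M F (\<lambda>_. a) x = a"
    by (intro real_cond_exp_F_meas) auto
  moreover have "AE x in M. real_cond_exp M F (\<lambda>x. b * f x) x = b * real_cond_exp M F f x"
    using assms by (rule real_cond_exp_cmult)
  ultimately show ?thesis by eventually_elim simp
qed

lemma (in sigma_finite_subalgebra) AE_real_cond_exp_nested_le: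
  fixes f g :: "'a \<Rightarrow> real"
  assumes "subalgebra M G" "subalgebra G F" "integrable M f" "integrable M g"
    and "AE x in M. real_cond_exp M G f x \<le> g x"
  shows "AE x in M. real_cond_exp M F f x \<le> real_cond_exp M F g x"
proof -
  interpret G: sigma_finite_subalgebra M G
    by (rule nested_subalg_is_sigma_finite[OF assms(1,2)])
  have "AE x in M. real_cond_exp M F (real_cond_exp M G f) x \<le> real_cond_exp M F g x"
    by (rule real_cond_exp_mono[OF assms(5) G.real_cond_exp_int(1)[OF assms(3)] assms(4)])
  moreover have "AE x in M. real_cond_exp M F (real_cond_exp M G f) x = real_cond_exp M F f x"
    by (rule real_cond_exp_nested_subalg[OF assms(1-3)])
  ultimately show ?thesis by eventually_elim simp
qed

fun stopped_prod :: "real \<Rightarrow> (nat \<Rightarrow> 'a \<Rightarrow> real) \<Rightarrow> nat \<Rightarrow> 'a \<Rightarrow> real" where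
  "stopped_prod a D 0 x = 1"
| "stopped_prod a D (Suc n) x =
     (if stopped_prod a D n x < a then stopped_prod a D n x * D n x else stopped_prod a D n x)"

lemma stopped_prod_eq_prod: "stopped_prod a D n x < a \<Longrightarrow> stopped_prod a D n x = (\<Prod>k<n. D k x)"
  by (induction n) (auto split: if_splits)

lemma stopped_prod_ge_of_prod_ge: "a \<le> (\<Prod>k<n. D k x) \<Longrightarrow> a \<le> stopped_prod a D n x"
  using stopped_prod_eq_prod[of a D n x] by linarith

locale supermartingale_factors = prob_space M for M :: "'a measure" +
  fixes G :: "nat \<Rightarrow> 'a measure" and D :: "nat \<Rightarrow> 'a \<Rightarrow> real" and B :: real
  assumes subalg: "\<And>n. subalgebra M (G n)"
    and sets_G_mono: "\<And>m n. m \<le> n \<Longrightarrow> sets (G m) \<subseteq> sets (G n)"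
    and D_measurable: "\<And>n. D n \<in> borel_measurable (G (Suc n))"
    and D_bounds: "\<And>n x. x \<in> space M \<Longrightarrow> 0 \<le> D n x \<and> D n x \<le> B"
    and AE_cond_exp_D_le_one: "\<And>n. AE x in M. real_cond_exp M (G n) (D n) x \<le> 1"
begin

lemma sigma_finite_subalgebra_G: "sigma_finite_subalgebra M (G n)"
  by (intro finite_measure_subalgebra_is_sigma_finite finite_measure_subalgebra.intro
        finite_measure_subalgebra_axioms.intro subalg finite_measure_axioms)

lemma measurable_G_mono: "m \<le> n \<Longrightarrow> f \<in> borel_measurable (G m) \<Longrightarrow> f \<in> borel_measurable (G n)"
  by (rule measurable_from_subalg[of "G n"])
     (use subalg sets_G_mono in \<open>auto simp: subalgebra_def\<close>)

lemma stopped_prod_measurable: "stopped_prod a D n \<in> borel_measurable (G n)"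
proof (induction n)
  case 0
  have "stopped_prod a D 0 = (\<lambda>_. 1)" by auto
  then show ?case by simp
next
  case (Suc n)
  have [measurable]: "stopped_prod a D n \<in> borel_measurable (G (Suc n))"
    by (rule measurable_G_mono[OF _ Suc]) simp
  have [measurable]: "D n \<in> borel_measurable (G (Suc n))" by (rule D_measurable)
  have "stopped_prod a D (Suc n) = (\<lambda>x. if stopped_prod a D n x < a
          then stopped_prod a D n x * D n x else stopped_prod a D n x)"
    by (rule ext) (rule stopped_prod.simps)
  also have "\<dots> \<in> borel_measurable (G (Suc n))" by measurable
  finally show ?case .
qed

lemma stopped_prod_bounds:
  assumes "0 \<le> a" "x \<in> space M"
  shows "0 \<le> stopped_prod a D n x \<and> stopped_prod a D n x \<le> max 1 (a * B)"
proof (induction n)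
  case (Suc n)
  have D: "0 \<le> D n x" "D n x \<le> B" using D_bounds[OF assms(2)] by auto
  show ?case
  proof (cases "stopped_prod a D n x < a")
    case True
    then have "stopped_prod a D n x * D n x \<le> a * B"
      using Suc D assms(1) by (intro mult_mono) auto
    then show ?thesis using True Suc D by auto
  qed (use Suc in simp)
qed (use assms in simp)

lemma integrable_stopped_prod: "0 \<le> a \<Longrightarrow> integrable M (stopped_prod a D n)"
  by (intro integrable_const_bound[where B = "max 1 (a * B)"] AE_I2
        measurable_from_subalg[OF subalg stopped_prod_measurable])
     (use stopped_prod_bounds in fastforce)

lemma integral_mult_D_le:
  assumes f_meas: "f \<in> borel_measurable (G n)"
    and f_bounds: "\<And>x. x \<in> space M \<Longrightarrow> 0 \<le> f x \<and> f x \<le> C"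
  shows "integrable M (\<lambda>x. f x * D n x)" "(\<integral>x. f x * D n x \<partial>M) \<le> (\<integral>x. f x \<partial>M)"
proof -
  interpret Gn: sigma_finite_subalgebra M "G n" by (rule sigma_finite_subalgebra_G)
  have f_meas_M: "f \<in> borel_measurable M" by (rule measurable_from_subalg[OF subalg f_meas])
  have D_meas: "D n \<in> borel_measurable M" by (rule measurable_from_subalg[OF subalg D_measurable])
  have int_f: "integrable M f"
    by (intro integrable_const_bound[where B = C] AE_I2 f_meas_M) (use f_bounds in fastforce)
  show int_fD: "integrable M (\<lambda>x. f x * D n x)"
  proof (intro integrable_const_bound[where B = "C * B"] AE_I2)
    fix x assume x: "x \<in> space M"
    have "0 \<le> f x" "f x \<le> C" "0 \<le> D n x" "D n x \<le> B"
      using f_bounds[OF x] D_bounds[OF x] by auto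
    then show "norm (f x * D n x) \<le> C * B"
      by (simp add: mult_mono)
  qed (use f_meas_M D_meas in measurable)
  show "(\<integral>x. f x * D n x \<partial>M) \<le> (\<integral>x. f x \<partial>M)"
    using f_bounds AE_cond_exp_D_le_one
    by (intro Gn.integral_mult_le_of_cond_exp_le_one[OF f_meas D_meas int_f int_fD]) auto
qed

lemma integral_stopped_prod_le_one:
  assumes "0 \<le> a"
  shows "(\<integral>x. stopped_prod a D n x \<partial>M) \<le> 1"
proof (induction n)
  case 0
  then show ?case by (simp add: prob_space)
next
  case (Suc n)
  define f where "f x = (if stopped_prod a D n x < a then stopped_prod a D n x else 0)" for x
  have [measurable]: "stopped_prod a D n \<in> borel_measurable (G n)"
    by (rule stopped_prod_measurable)
  have f_meas: "f \<in> borel_measurable (G n)" unfolding f_def by measurable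
  have f_bounds: "0 \<le> f x \<and> f x \<le> a" if "x \<in> space M" for x
    using stopped_prod_bounds[OF assms that] assms by (simp add: f_def)
  note fD = integral_mult_D_le[OF f_meas f_bounds]
  have int_f: "integrable M f"
    by (intro integrable_const_bound[where B = a] AE_I2 measurable_from_subalg[OF subalg f_meas])
       (use f_bounds in fastforce)
  have "stopped_prod a D (Suc n) = (\<lambda>x. f x * D n x + (stopped_prod a D n x - f x))"
    by (auto simp: f_def)
  then have "(\<integral>x. stopped_prod a D (Suc n) x \<partial>M)
      = (\<integral>x. f x * D n x \<partial>M) + ((\<integral>x. stopped_prod a D n x \<partial>M) - (\<integral>x. f x \<partial>M))"
    using fD(1) int_f integrable_stopped_prod[OF assms] by simp
  also have "\<dots> \<le> (\<integral>x. stopped_prod a D n x \<partial>M)"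
    using fD(2) by simp
  finally show ?case using Suc by simp
qed

theorem ville_inequality:
  assumes "0 < a"
  shows "measure M {x \<in> space M. \<forall>n. (\<Prod>k<n. D k x) < a} \<ge> 1 - 1 / a"
proof -
  define U where "U n = {x \<in> space M. a \<le> stopped_prod a D n x}" for n
  have [measurable]: "stopped_prod a D n \<in> borel_measurable M" for n
    by (rule measurable_from_subalg[OF subalg stopped_prod_measurable])
  have [measurable]: "D n \<in> borel_measurable M" for n
    by (rule measurable_from_subalg[OF subalg D_measurable])
  have U_sets: "U n \<in> sets M" for n
    unfolding U_def by measurable
  have "measure M (U n) \<le> 1 / a" for n
  proof -
    have "measure M (U n) \<le> (\<integral>x. stopped_prod a D n x \<partial>M) / a"
      unfolding U_def using assms stopped_prod_bounds
      by (intro integral_Markov_inequality_measure[OF integrable_stopped_prod sets.top] AE_I2) auto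
    also have "\<dots> \<le> 1 / a"
      using integral_stopped_prod_le_one assms by (intro divide_right_mono) auto
    finally show ?thesis .
  qed
  moreover have "(\<lambda>n. measure M (U n)) \<longlonglongrightarrow> measure M (\<Union>n. U n)"
    by (intro finite_Lim_measure_incseq incseq_SucI) (auto simp: U_def U_sets)
  ultimately have "measure M (\<Union>n. U n) \<le> 1 / a"
    by (intro LIMSEQ_le_const2) auto
  have "(\<Prod>k<n. D k x) < a" if "x \<in> space M" "x \<notin> U n" for x n
  proof (rule ccontr)
    assume "\<not> (\<Prod>k<n. D k x) < a"
    then have "a \<le> stopped_prod a D n x" by (intro stopped_prod_ge_of_prod_ge) simp
    with that show False by (simp add: U_def)
  qed
  then have sub: "space M - (\<Union>n. U n) \<subseteq> {x \<in> space M. \<forall>n. (\<Prod>k<n. D k x) < a}"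
    by blast
  have "1 - 1 / a \<le> measure M (space M - (\<Union>n. U n))"
    using \<open>measure M (\<Union>n. U n) \<le> 1 / a\<close> U_sets by (subst prob_compl) auto
  also have "\<dots> \<le> measure M {x \<in> space M. \<forall>n. (\<Prod>k<n. D k x) < a}"
    by (rule finite_measure_mono[OF sub]) measurable
  finally show ?thesis .
qed

end

declare Jfun.simps[simp del]

locale episodic_filtration = prob_space M for M :: "'a measure" +
  fixes F :: "nat \<Rightarrow> nat \<Rightarrow> 'a measure" and X :: "nat \<Rightarrow> nat \<Rightarrow> 'a \<Rightarrow> real"
    and H :: nat and c :: real
  assumes subalg: "\<And>k h. 1 \<le> k \<Longrightarrow> 1 \<le> h \<Longrightarrow> h \<le> H \<Longrightarrow> subalgebra M (F k h)"
    and sets_F_mono: "\<And>k h k' h'. 1 \<le> k \<Longrightarrow> 1 \<le> h \<Longrightarrow> h \<le> H \<Longrightarrow> 1 \<le> h' \<Longrightarrow> h' \<le> H \<Longrightarrow>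
                 (k < k' \<or> (k = k' \<and> h \<le> h')) \<Longrightarrow> sets (F k h) \<subseteq> sets (F k' h')"
    and X_measurable: "\<And>k h. 1 \<le> k \<Longrightarrow> 1 \<le> h \<Longrightarrow> h \<le> H \<Longrightarrow> X k h \<in> borel_measurable (F k h)"
    and X_nonneg: "\<And>k h \<omega>. 1 \<le> k \<Longrightarrow> 1 \<le> h \<Longrightarrow> h \<le> H \<Longrightarrow> \<omega> \<in> space M \<Longrightarrow> 0 \<le> X k h \<omega>"
    and c_pos: "0 < c"
begin

abbreviation J :: "nat \<Rightarrow> nat \<Rightarrow> 'a \<Rightarrow> real" where
  "J k h \<equiv> Jfun M F X c H k h"

lemma J_eq: "h \<le> H \<Longrightarrow> J k h = (\<lambda>\<omega>. min (X k h \<omega> + real_cond_exp M (F k h) (J k (Suc h)) \<omega>) c)"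
  by (subst Jfun.simps) simp

lemma J_beyond: "H < h \<Longrightarrow> J k h = (\<lambda>_. 0)"
  by (subst Jfun.simps) simp

lemma J_le_c: "J k h \<omega> \<le> c"
  by (cases "h \<le> H") (use J_eq J_beyond c_pos in auto)

lemma finite_measure_subalgebra_F:
  "1 \<le> k \<Longrightarrow> 1 \<le> h \<Longrightarrow> h \<le> H \<Longrightarrow> finite_measure_subalgebra M (F k h)"
  by (intro finite_measure_subalgebra.intro finite_measure_subalgebra_axioms.intro
        subalg finite_measure_axioms)

lemma subalgebra_F_F:
  assumes "1 \<le> k" "1 \<le> h" "h \<le> H" "1 \<le> h'" "h' \<le> H" "k < k' \<or> (k = k' \<and> h \<le> h')"
  shows "subalgebra (F k' h') (F k h)"
proof -
  have "1 \<le> k'" using assms(1,6) by auto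
  then show ?thesis
    using subalg sets_F_mono[OF assms] assms by (auto simp: subalgebra_def)
qed

lemma measurable_F_mono:
  assumes "1 \<le> k" "1 \<le> h" "h \<le> H" "1 \<le> h'" "h' \<le> H" "k < k' \<or> (k = k' \<and> h \<le> h')"
    and "f \<in> borel_measurable (F k h)"
  shows "f \<in> borel_measurable (F k' h')"
  by (rule measurable_from_subalg[OF subalgebra_F_F[OF assms(1-6)] assms(7)])

lemma J_measurable:
  assumes "1 \<le> k" "1 \<le> h" "h \<le> H"
  shows "J k h \<in> borel_measurable (F k h)"
proof -
  have [measurable]: "X k h \<in> borel_measurable (F k h)" using X_measurable assms by blast
  show ?thesis unfolding J_eq[OF assms(3)] by measurable
qed

lemma J_measurable_M: "1 \<le> k \<Longrightarrow> 1 \<le> h \<Longrightarrow> J k h \<in> borel_measurable M"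
  by (cases "h \<le> H") (auto simp: J_beyond intro: measurable_from_subalg[OF subalg J_measurable])

lemma X_measurable_M: "1 \<le> k \<Longrightarrow> 1 \<le> h \<Longrightarrow> h \<le> H \<Longrightarrow> X k h \<in> borel_measurable M"
  by (rule measurable_from_subalg[OF subalg X_measurable])

lemma AE_J_nonneg: "1 \<le> k \<Longrightarrow> 1 \<le> h \<Longrightarrow> AE \<omega> in M. 0 \<le> J k h \<omega>"
proof (induction h rule: measure_induct_rule[where f = "\<lambda>h. Suc H - h"])
  case (less h)
  show ?case
  proof (cases "h \<le> H")
    case True
    interpret Fkh: finite_measure_subalgebra M "F k h"
      using finite_measure_subalgebra_F less.prems True by blast
    have "AE \<omega> in M. 0 \<le> real_cond_exp M (F k h) (J k (Suc h)) \<omega>"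
      using less True by (intro Fkh.real_cond_exp_pos J_measurable_M) auto
    then show ?thesis
      using AE_space
      by eventually_elim (use X_nonneg[OF less.prems True] c_pos in \<open>simp add: J_eq[OF True]\<close>)
  qed (simp add: J_beyond)
qed

lemma integrable_J:
  assumes "1 \<le> k" "1 \<le> h"
  shows "integrable M (J k h)"
proof (rule integrable_const_bound[where B = c])
  show "AE \<omega> in M. norm (J k h \<omega>) \<le> c"
    using AE_J_nonneg[OF assms] by eventually_elim (simp add: J_le_c)
qed (rule J_measurable_M[OF assms])

lemma AE_cond_exp_J_bounds:
  assumes "1 \<le> k" "1 \<le> h" "h \<le> H"
  shows "AE \<omega> in M. 0 \<le> real_cond_exp M (F k h) (J k (Suc h)) \<omega>
                    \<and> real_cond_exp M (F k h) (J k (Suc h)) \<omega> \<le> c"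
proof -
  interpret Fkh: finite_measure_subalgebra M "F k h" by (rule finite_measure_subalgebra_F[OF assms])
  have "AE \<omega> in M. 0 \<le> real_cond_exp M (F k h) (J k (Suc h)) \<omega>"
    using assms by (intro Fkh.real_cond_exp_ge_c integrable_J AE_J_nonneg) auto
  moreover have "AE \<omega> in M. real_cond_exp M (F k h) (J k (Suc h)) \<omega> \<le> c"
    using assms by (intro Fkh.real_cond_exp_le_c integrable_J AE_I2 J_le_c) auto
  ultimately show ?thesis by eventually_elim simp
qed

definition tail_weight :: "nat \<Rightarrow> nat \<Rightarrow> 'a \<Rightarrow> real" where
  "tail_weight k h \<omega> = exp (- (\<Sum>h'=h..H. X k h' \<omega>) / c)"

lemma tail_weight_Suc:
  assumes "h \<le> H"
  shows "tail_weight k h = (\<lambda>\<omega>. exp (- X k h \<omega> / c) * tail_weight k (Suc h) \<omega>)"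
proof
  fix \<omega>
  have "- (\<Sum>h'=h..H. X k h' \<omega>) / c = - X k h \<omega> / c + - (\<Sum>h'=Suc h..H. X k h' \<omega>) / c"
    using assms by (simp add: sum.atLeast_Suc_atMost[of h H] diff_divide_distrib)
  then show "tail_weight k h \<omega> = exp (- X k h \<omega> / c) * tail_weight k (Suc h) \<omega>"
    unfolding tail_weight_def by (simp add: exp_add[symmetric])
qed

lemma tail_weight_beyond: "tail_weight k (Suc H) = (\<lambda>_. 1)"
  by (simp add: tail_weight_def[abs_def])

lemma tail_weight_bounds:
  assumes "1 \<le> k" "1 \<le> h" "\<omega> \<in> space M"
  shows "0 < tail_weight k h \<omega> \<and> tail_weight k h \<omega> \<le> 1"
proof -
  have "0 \<le> (\<Sum>h'=h..H. X k h' \<omega>)" using assms by (intro sum_nonneg X_nonneg) auto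
  then show ?thesis using c_pos by (simp add: tail_weight_def)
qed

lemma tail_weight_measurable_M:
  assumes "1 \<le> k" "1 \<le> h"
  shows "tail_weight k h \<in> borel_measurable M"
proof -
  have [measurable]: "(\<lambda>\<omega>. \<Sum>h'=h..H. X k h' \<omega>) \<in> borel_measurable M"
    using assms by (intro borel_measurable_sum X_measurable_M) auto
  show ?thesis unfolding tail_weight_def[abs_def] by measurable
qed

lemma integrable_tail_weight: "1 \<le> k \<Longrightarrow> 1 \<le> h \<Longrightarrow> integrable M (tail_weight k h)"
  by (intro integrable_const_bound[where B = 1] AE_I2 tail_weight_measurable_M)
     (use tail_weight_bounds in fastforce)+

lemma AE_cond_exp_tail_weight_le_of_Suc:
  assumes "1 \<le> k" "1 \<le> h" "h \<le> H"
    and "AE \<omega> in M. real_cond_exp M (F k h) (tail_weight k (Suc h)) \<omega>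
                     \<le> 1 - real_cond_exp M (F k h) (J k (Suc h)) \<omega> / (2 * c)"
  shows "AE \<omega> in M. real_cond_exp M (F k h) (tail_weight k h) \<omega> \<le> 1 - J k h \<omega> / (2 * c)"
proof -
  interpret Fkh: finite_measure_subalgebra M "F k h" by (rule finite_measure_subalgebra_F[OF assms(1-3)])
  have [measurable]: "X k h \<in> borel_measurable (F k h)" using X_measurable assms by blast
  have [measurable]: "tail_weight k (Suc h) \<in> borel_measurable M"
    using tail_weight_measurable_M assms by simp
  have "AE \<omega> in M. real_cond_exp M (F k h) (tail_weight k h) \<omega>
          = exp (- X k h \<omega> / c) * real_cond_exp M (F k h) (tail_weight k (Suc h)) \<omega>"
    unfolding tail_weight_Suc[OF assms(3)]
    using integrable_tail_weight[OF assms(1,2), unfolded tail_weight_Suc[OF assms(3)]]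
    by (intro Fkh.real_cond_exp_mult) measurable
  then show ?thesis
    using assms(4) AE_cond_exp_J_bounds[OF assms(1-3)] AE_space
  proof eventually_elim
    case (elim \<omega>)
    let ?e = "real_cond_exp M (F k h) (J k (Suc h)) \<omega>"
    have "real_cond_exp M (F k h) (tail_weight k h) \<omega> \<le> exp (- X k h \<omega> / c) * (1 - ?e / (2 * c))"
      using elim by (simp add: mult_left_mono)
    also have "\<dots> \<le> 1 - min (X k h \<omega> + ?e) c / (2 * c)"
      using elim X_nonneg assms c_pos by (intro exp_neg_mult_le_one_minus_min) auto
    finally show ?case by (simp add: J_eq[OF assms(3)])
  qed
qed

lemma AE_cond_exp_tail_weight_le:
  "1 \<le> k \<Longrightarrow> 1 \<le> h \<Longrightarrow> h \<le> H \<Longrightarrow>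
     AE \<omega> in M. real_cond_exp M (F k h) (tail_weight k h) \<omega> \<le> 1 - J k h \<omega> / (2 * c)"
proof (induction h rule: measure_induct_rule[where f = "\<lambda>h. H - h"])
  case (less h)
  interpret Fkh: finite_measure_subalgebra M "F k h" by (rule finite_measure_subalgebra_F[OF less.prems])
  show ?case
  proof (rule AE_cond_exp_tail_weight_le_of_Suc[OF less.prems])
    consider "h = H" | "h < H" using less.prems by linarith
    then show "AE \<omega> in M. real_cond_exp M (F k h) (tail_weight k (Suc h)) \<omega>
                 \<le> 1 - real_cond_exp M (F k h) (J k (Suc h)) \<omega> / (2 * c)"
    proof cases
      case 1
      have "AE \<omega> in M. real_cond_exp M (F k h) (\<lambda>_. 1) \<omega> = 1"
        and "AE \<omega> in M. real_cond_exp M (F k h) (\<lambda>_. 0) \<omega> = 0"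
        by (intro Fkh.real_cond_exp_F_meas; simp)+
      then show ?thesis
        unfolding 1 tail_weight_beyond J_beyond[OF lessI] by eventually_elim simp
    next
      case 2
      have sub: "subalgebra (F k (Suc h)) (F k h)"
        using 2 less.prems by (intro subalgebra_F_F) auto
      have subM: "subalgebra M (F k (Suc h))"
        using 2 less.prems by (intro subalg) auto
      have int: "integrable M (\<lambda>\<omega>. 1 + (- 1 / (2 * c)) * J k (Suc h) \<omega>)"
        using integrable_J[of k "Suc h"] less.prems by simp
      have "AE \<omega> in M. real_cond_exp M (F k (Suc h)) (tail_weight k (Suc h)) \<omega>
              \<le> 1 + (- 1 / (2 * c)) * J k (Suc h) \<omega>"
        using less.IH[of "Suc h"] 2 less.prems by auto
      then have "AE \<omega> in M. real_cond_exp M (F k h) (tail_weight k (Suc h)) \<omega>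
                   \<le> real_cond_exp M (F k h) (\<lambda>\<omega>. 1 + (- 1 / (2 * c)) * J k (Suc h) \<omega>) \<omega>"
        using less.prems by (intro Fkh.AE_real_cond_exp_nested_le[OF subM sub _ int] integrable_tail_weight) auto
      moreover have "AE \<omega> in M. real_cond_exp M (F k h) (\<lambda>\<omega>. 1 + (- 1 / (2 * c)) * J k (Suc h) \<omega>) \<omega>
                       = 1 + (- 1 / (2 * c)) * real_cond_exp M (F k h) (J k (Suc h)) \<omega>"
        using less.prems by (intro Fkh.AE_real_cond_exp_affine integrable_J) auto
      ultimately show ?thesis by eventually_elim simp
    qed
  qed
qed

definition episode_factor :: "nat \<Rightarrow> 'a \<Rightarrow> real" where
  "episode_factor k \<omega> = exp (J k 1 \<omega> / (2 * c)) * tail_weight k 1 \<omega>"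

lemma episode_factor_bounds:
  assumes "1 \<le> k" "\<omega> \<in> space M"
  shows "0 \<le> episode_factor k \<omega> \<and> episode_factor k \<omega> \<le> exp (1 / 2)"
proof -
  have "exp (J k 1 \<omega> / (2 * c)) \<le> exp (1 / 2)"
    using J_le_c[of k 1 \<omega>] c_pos by (simp add: field_simps)
  moreover have "0 < tail_weight k 1 \<omega>" "tail_weight k 1 \<omega> \<le> 1"
    using tail_weight_bounds[OF assms(1) _ assms(2), of 1] by auto
  ultimately have "exp (J k 1 \<omega> / (2 * c)) * tail_weight k 1 \<omega> \<le> exp (1 / 2) * 1"
    by (intro mult_mono) auto
  then show ?thesis
    using \<open>0 < tail_weight k 1 \<omega>\<close> by (simp add: episode_factor_def)
qed

lemma episode_factor_measurable_M: "1 \<le> k \<Longrightarrow> episode_factor k \<in> borel_measurable M"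
  using J_measurable_M[of k 1] tail_weight_measurable_M[of k 1]
  unfolding episode_factor_def[abs_def] by measurable

lemma episode_factor_measurable:
  assumes "1 \<le> k" "1 \<le> H"
  shows "episode_factor k \<in> borel_measurable (F (Suc k) 1)"
proof -
  have [measurable]: "J k 1 \<in> borel_measurable (F (Suc k) 1)"
    using assms by (intro measurable_F_mono[OF _ _ _ _ _ _ J_measurable]) auto
  have [measurable]: "(\<lambda>\<omega>. \<Sum>h=1..H. X k h \<omega>) \<in> borel_measurable (F (Suc k) 1)"
    using assms by (intro borel_measurable_sum measurable_F_mono[OF _ _ _ _ _ _ X_measurable]) auto
  show ?thesis unfolding episode_factor_def[abs_def] tail_weight_def by measurable
qed

lemma integrable_episode_factor: "1 \<le> k \<Longrightarrow> integrable M (episode_factor k)"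
  by (intro integrable_const_bound[where B = "exp (1 / 2)"] AE_I2 episode_factor_measurable_M)
     (use episode_factor_bounds in fastforce)+

lemma AE_cond_exp_episode_factor_le_one:
  assumes "1 \<le> k" "1 \<le> H"
  shows "AE \<omega> in M. real_cond_exp M (F k 1) (episode_factor k) \<omega> \<le> 1"
proof -
  interpret Fk1: finite_measure_subalgebra M "F k 1"
    by (rule finite_measure_subalgebra_F[OF assms(1) _ assms(2)]) simp
  have [measurable]: "J k 1 \<in> borel_measurable (F k 1)" using J_measurable assms by blast
  have [measurable]: "tail_weight k 1 \<in> borel_measurable M"
    using tail_weight_measurable_M assms by blast
  have "AE \<omega> in M. real_cond_exp M (F k 1) (episode_factor k) \<omega>
          = exp (J k 1 \<omega> / (2 * c)) * real_cond_exp M (F k 1) (tail_weight k 1) \<omega>"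
    unfolding episode_factor_def[abs_def]
    using integrable_episode_factor[OF assms(1), unfolded episode_factor_def[abs_def]]
    by (intro Fk1.real_cond_exp_mult) measurable
  then show ?thesis
    using AE_cond_exp_tail_weight_le[OF assms(1) order_refl assms(2)]
  proof eventually_elim
    case (elim \<omega>)
    then have "real_cond_exp M (F k 1) (episode_factor k) \<omega>
                 \<le> exp (J k 1 \<omega> / (2 * c)) * (1 - J k 1 \<omega> / (2 * c))"
      by (simp add: mult_left_mono)
    also have "\<dots> \<le> 1" by (rule exp_mult_one_minus_le_one)
    finally show ?case .
  qed
qed

lemma supermartingale_factors_episode_factor:
  assumes "1 \<le> H"
  shows "supermartingale_factors M (\<lambda>n. F (Suc n) 1) (\<lambda>n. episode_factor (Suc n)) (exp (1 / 2))"
proof unfold_locales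
  show "subalgebra M (F (Suc n) 1)" for n using assms by (intro subalg) auto
  show "sets (F (Suc m) 1) \<subseteq> sets (F (Suc n) 1)" if "m \<le> n" for m n
    using that assms by (intro sets_F_mono) auto
  show "episode_factor (Suc n) \<in> borel_measurable (F (Suc (Suc n)) 1)" for n
    using assms by (intro episode_factor_measurable) auto
  show "0 \<le> episode_factor (Suc n) x \<and> episode_factor (Suc n) x \<le> exp (1 / 2)"
    if "x \<in> space M" for n x
    using that by (intro episode_factor_bounds) auto
  show "AE x in M. real_cond_exp M (F (Suc n) 1) (episode_factor (Suc n)) x \<le> 1" for n
    using assms by (intro AE_cond_exp_episode_factor_le_one) auto
qed

lemma prod_episode_factor:
  "(\<Prod>k<K. episode_factor (Suc k) \<omega>)
     = exp ((\<Sum>k=1..K. J k 1 \<omega>) / (2 * c) - (\<Sum>k=1..K. \<Sum>h=1..H. X k h \<omega>) / c)"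
proof -
  have "episode_factor k \<omega> = exp (J k 1 \<omega> / (2 * c) - (\<Sum>h=1..H. X k h \<omega>) / c)" for k
    by (simp add: episode_factor_def tail_weight_def exp_diff exp_minus field_simps)
  then have "(\<Prod>k<K. episode_factor (Suc k) \<omega>)
               = exp (\<Sum>k=1..K. J k 1 \<omega> / (2 * c) - (\<Sum>h=1..H. X k h \<omega>) / c)"
    by (simp add: exp_sum prod.atLeast1_atMost_eq)
  then show ?thesis by (simp add: sum_subtractf sum_divide_distrib)
qed

theorem prob_sum_J_le:
  assumes "1 \<le> H" "0 < \<delta>" "\<delta> \<le> 1" "2 * c * ln (1 / \<delta>) \<le> L"
  shows "measure M {\<omega> \<in> space M. \<forall>K. (\<Sum>k=1..K. J k 1 \<omega>)
                        \<le> 2 * (\<Sum>k=1..K. \<Sum>h=1..H. X k h \<omega>) + L} \<ge> 1 - \<delta>"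
    (is "measure M ?good \<ge> _")
proof -
  interpret supermartingale_factors M "\<lambda>n. F (Suc n) 1" "\<lambda>n. episode_factor (Suc n)" "exp (1 / 2)"
    by (rule supermartingale_factors_episode_factor[OF assms(1)])
  have "(\<Sum>k=1..K. J k 1 \<omega>) \<le> 2 * (\<Sum>k=1..K. \<Sum>h=1..H. X k h \<omega>) + L"
    if "(\<Prod>k<K. episode_factor (Suc k) \<omega>) < 1 / \<delta>" for K \<omega>
  proof -
    let ?x = "(\<Sum>k=1..K. J k 1 \<omega>) / (2 * c) - (\<Sum>k=1..K. \<Sum>h=1..H. X k h \<omega>) / c"
    have "exp ?x < exp (ln (1 / \<delta>))"
      using that assms(2) by (simp add: prod_episode_factor)
    then have "?x < ln (1 / \<delta>)" by simp
    then show ?thesis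
      using assms(4) c_pos by (simp add: field_simps)
  qed
  then have sub: "{\<omega> \<in> space M. \<forall>n. (\<Prod>k<n. episode_factor (Suc k) \<omega>) < 1 / \<delta>} \<subseteq> ?good"
    by blast
  have "?good \<in> sets M"
  proof -
    have [measurable]: "(\<lambda>\<omega>. \<Sum>k=1..K. J k 1 \<omega>) \<in> borel_measurable M" for K
      by (intro borel_measurable_sum J_measurable_M) auto
    have [measurable]: "(\<lambda>\<omega>. \<Sum>k=1..K. \<Sum>h=1..H. X k h \<omega>) \<in> borel_measurable M" for K
      by (intro borel_measurable_sum X_measurable_M) auto
    show ?thesis by measurable
  qed
  have "1 - \<delta> \<le> measure M {\<omega> \<in> space M. \<forall>n. (\<Prod>k<n. episode_factor (Suc k) \<omega>) < 1 / \<delta>}"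
    using ville_inequality[of "1 / \<delta>"] assms(2) by simp
  also have "\<dots> \<le> measure M ?good"
    by (rule finite_measure_mono[OF sub \<open>?good \<in> sets M\<close>])
  finally show ?thesis .
qed

end

theorem lemma2:
  fixes M :: "'a measure" and F :: "nat \<Rightarrow> nat \<Rightarrow> 'a measure"
    and X :: "nat \<Rightarrow> nat \<Rightarrow> 'a \<Rightarrow> real" and H :: nat and c \<delta> :: real
  assumes "prob_space M"
    and subalg: "\<And>k h. 1 \<le> k \<Longrightarrow> 1 \<le> h \<Longrightarrow> h \<le> H \<Longrightarrow> subalgebra M (F k h)"
    and mono: "\<And>k h k' h'. 1 \<le> k \<Longrightarrow> 1 \<le> h \<Longrightarrow> h \<le> H \<Longrightarrow> 1 \<le> h' \<Longrightarrow> h' \<le> H \<Longrightarrow>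
                 (k < k' \<or> (k = k' \<and> h \<le> h')) \<Longrightarrow> sets (F k h) \<subseteq> sets (F k' h')"
    and meas: "\<And>k h. 1 \<le> k \<Longrightarrow> 1 \<le> h \<Longrightarrow> h \<le> H \<Longrightarrow> X k h \<in> borel_measurable (F k h)"
    and nonneg: "\<And>k h \<omega>. 1 \<le> k \<Longrightarrow> 1 \<le> h \<Longrightarrow> h \<le> H \<Longrightarrow> \<omega> \<in> space M \<Longrightarrow> 0 \<le> X k h \<omega>"
    and "c > 0"
    and "0 < \<delta>" and "\<delta> \<le> 1"
  shows "measure M {\<omega> \<in> space M. \<forall>K::nat.
           (\<Sum>k=1..K. Jfun M F X c H k 1 \<omega>)
             \<le> 2 * (\<Sum>k=1..K. \<Sum>h=1..H. X k h \<omega>) + 6 * c * ln (2 / \<delta>)} \<ge> 1 - \<delta>"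
proof -
  interpret episodic_filtration M F X H c
    by (rule episodic_filtration.intro[OF assms(1) episodic_filtration_axioms.intro[OF assms(2-6)]])
  have ln_le: "ln (1 / \<delta>) \<le> ln (2 / \<delta>)" and ln_nonneg: "0 \<le> ln (1 / \<delta>)"
    using assms(7,8) by (simp_all add: divide_right_mono)
  show ?thesis
  proof (cases "H = 0")
    case True
    \<comment> \<open>nothing is assumed about the F k h, but all J k 1 vanish\<close>
    have "J k 1 \<omega> = 0" for k \<omega>
      using J_beyond[of 1 k] True by simp
    then show ?thesis
      unfolding True using ln_le ln_nonneg c_pos assms(7) by (simp add: prob_space)
  next
    case False
    have "2 * c * ln (1 / \<delta>) \<le> 6 * c * ln (2 / \<delta>)"
      using ln_le ln_nonneg c_pos by (simp add: mult_left_mono)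
    then show ?thesis
      using prob_sum_J_le[of \<delta>] False assms(7,8) by simp
  qed
qed

end
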